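(* Any finite linear combination (with complex coefficients) of Lipschitz positive definite functions $\mathbb R\to\mathbb C$ is the Fourier–Stieltjes transform $\widehat\eta$ of a complex Borel measure $\eta$ on $\mathbb R$ of finite total variation for which there exist $a,A>0$ with $|\eta|(\mathbb R\setminus[-r,r])\le Ar^{-a}$ for all $r\ge1$.
   Context: A function $g\colon\mathbb R\to\mathbb C$ is positive definite if $\sum_{i,j=1}^ng(x_i-x_j)z_i\overline{z_j}\ge0$ for all $n\ge1$, $x_i\in\mathbb R$, $z_i\in\mathbb C$. The Fourier–Stieltjes transform is $\widehat\eta(r)=\int_{\mathbb R}e^{-ir\xi}d\eta(\xi)$; $|\eta|$ is the variation of $\eta$. *)

theory Defs
  imports "HOL-Analysis.Analysis"
begin

definition pos_def_fun :: "(real \<Rightarrow> complex) \<Rightarrow> bool" where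
  "pos_def_fun g \<longleftrightarrow> (\<forall>(n::nat) (x::nat \<Rightarrow> real) (z::nat \<Rightarrow> complex).
     let s = (\<Sum>i\<in>{1..n}. \<Sum>j\<in>{1..n}. g (x i - x j) * z i * cnj (z j))
     in s \<in> \<real> \<and> 0 \<le> Re s)"

text \<open>A complex Borel measure on R, represented through its (Jordan-type) decomposition
  eta = (mu_pr - mu_nr) + i (mu_pi - mu_ni) into four finite Borel measures.
  Every complex Borel measure on R arises this way.\<close>
record cmeas =
  pr :: "real measure"
  nr :: "real measure"
  pim :: "real measure"
  nim :: "real measure"

definition is_cmeas :: "cmeas \<Rightarrow> bool" where
  "is_cmeas \<eta> \<longleftrightarrow> (\<forall>M \<in> {pr \<eta>, nr \<eta>, pim \<eta>, nim \<eta>}. sets M = sets borel \<and> finite_measure M)"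

definition cm_val :: "cmeas \<Rightarrow> real set \<Rightarrow> complex" where
  "cm_val \<eta> E = complex_of_real (measure (pr \<eta>) E - measure (nr \<eta>) E)
                 + \<i> * complex_of_real (measure (pim \<eta>) E - measure (nim \<eta>) E)"

definition cm_var :: "cmeas \<Rightarrow> real set \<Rightarrow> real" where
  "cm_var \<eta> E = Sup {(\<Sum>i<n. cmod (cm_val \<eta> (P i))) | (n::nat) (P::nat \<Rightarrow> real set).
      (\<forall>i<n. P i \<in> sets borel) \<and> disjoint_family_on P {..<n} \<and> (\<Union>i<n. P i) = E}"

definition fs_transform :: "cmeas \<Rightarrow> real \<Rightarrow> complex" where
  "fs_transform \<eta> r =
     (\<integral>\<xi>. exp (- \<i> * complex_of_real (r * \<xi>)) \<partial>(pr \<eta>))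
   - (\<integral>\<xi>. exp (- \<i> * complex_of_real (r * \<xi>)) \<partial>(nr \<eta>))
   + \<i> * ((\<integral>\<xi>. exp (- \<i> * complex_of_real (r * \<xi>)) \<partial>(pim \<eta>))
          - (\<integral>\<xi>. exp (- \<i> * complex_of_real (r * \<xi>)) \<partial>(nim \<eta>)))"

end

theory Submission
  imports Defs "HOL-Probability.Probability"
begin

(* Each g_i is, by a quantitative form of Bochner's theorem, the Fourier transform of a finite
   positive measure whose mass outside [-r, r] is O(1/r); splitting the coefficients c_i into
   their positive and negative real and imaginary parts then yields eta.

   For Bochner's theorem, let g be positive definite and L-Lipschitz with g 0 = 1. Positive
   definiteness of the samples g (k d) makes the Fejer sum
   sum_{j,k<M} g ((j - k) d) e^{i (j - k) d xi} nonnegative, so it is the density of a probability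
   measure on [-pi/d, pi/d] whose characteristic function at m d is g (-m d) (1 - |m|/M). Averaging
   these values against the Dirichlet kernel and using |1 - g t| <= L |t| bounds the tails uniformly
   along the grids d = 2^-N, so the measures are tight; a weak limit has characteristic function
   g (-t) at all dyadic t, hence everywhere by continuity. The truncation inequality
   mu {|x| >= 2/u} <= (1/u) integral_{-u}^{u} (1 - Re (char mu t)) dt finally gives the tail 4 L / r. *)

section \<open>Positive definite functions\<close>

lemma pos_def_fun_quadratic_form:
  fixes x :: "nat \<Rightarrow> real" and z :: "nat \<Rightarrow> complex"
  assumes "pos_def_fun g"
  shows "(\<Sum>j<M. \<Sum>k<M. g (x j - x k) * z j * cnj (z k)) \<in> \<real> \<and>
         0 \<le> Re (\<Sum>j<M. \<Sum>k<M. g (x j - x k) * z j * cnj (z k))"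
proof -
  have "(\<Sum>i\<in>{1..M}. \<Sum>j\<in>{1..M}. g (x (i-1) - x (j-1)) * z (i-1) * cnj (z (j-1)))
      = (\<Sum>j<M. \<Sum>k<M. g (x j - x k) * z j * cnj (z k))"
    by (simp add: sum.atLeast1_atMost_eq)
  moreover have "let s = (\<Sum>i\<in>{1..M}. \<Sum>j\<in>{1..M}. g (x (i-1) - x (j-1)) * z (i-1) * cnj (z (j-1)))
      in s \<in> \<real> \<and> 0 \<le> Re s"
    using assms unfolding pos_def_fun_def
    by (elim allE[where x=M] allE[where x="\<lambda>i. x (i-1)"] allE[where x="\<lambda>i. z (i-1)"])
  ultimately show ?thesis by (simp only: Let_def)
qed

lemma pos_def_fun_at_0:
  assumes "pos_def_fun g"
  shows "g 0 \<in> \<real> \<and> 0 \<le> Re (g 0)"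
  using pos_def_fun_quadratic_form[OF assms, where M=1 and x="\<lambda>_. 0" and z="\<lambda>_. 1"] by simp

lemma pos_def_fun_zero: "pos_def_fun (\<lambda>_. 0)"
  unfolding pos_def_fun_def Let_def by simp

lemma pos_def_fun_one: "pos_def_fun (\<lambda>_. 1)"
  unfolding pos_def_fun_def Let_def
proof (intro allI)
  fix n :: nat and x :: "nat \<Rightarrow> real" and z :: "nat \<Rightarrow> complex"
  have "(\<Sum>i\<in>{1..n}. \<Sum>j\<in>{1..n}. 1 * z i * cnj (z j))
      = (\<Sum>i\<in>{1..n}. z i) * cnj (\<Sum>j\<in>{1..n}. z j)"
    by (simp add: sum_distrib_left sum_distrib_right cnj_sum, rule sum.swap)
  also have "\<dots> = complex_of_real ((cmod (\<Sum>i\<in>{1..n}. z i))\<^sup>2)"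
    by (rule complex_norm_square[symmetric])
  finally show "(\<Sum>i\<in>{1..n}. \<Sum>j\<in>{1..n}. 1 * z i * cnj (z j)) \<in> \<real> \<and>
      0 \<le> Re (\<Sum>i\<in>{1..n}. \<Sum>j\<in>{1..n}. 1 * z i * cnj (z j))"
    by simp
qed

lemma pos_def_fun_add:
  assumes "pos_def_fun f" "pos_def_fun h"
  shows "pos_def_fun (\<lambda>x. f x + h x)"
  unfolding pos_def_fun_def Let_def
proof (intro allI)
  fix n :: nat and x :: "nat \<Rightarrow> real" and z :: "nat \<Rightarrow> complex"
  let ?Q = "\<lambda>g. \<Sum>i\<in>{1..n}. \<Sum>j\<in>{1..n}. g (x i - x j) * z i * cnj (z j)"
  have "?Q (\<lambda>y. f y + h y) = ?Q f + ?Q h"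
    by (simp add: distrib_right sum.distrib)
  moreover have "?Q f \<in> \<real> \<and> 0 \<le> Re (?Q f)" "?Q h \<in> \<real> \<and> 0 \<le> Re (?Q h)"
    using assms unfolding pos_def_fun_def Let_def by blast+
  ultimately show "?Q (\<lambda>y. f y + h y) \<in> \<real> \<and> 0 \<le> Re (?Q (\<lambda>y. f y + h y))"
    by auto
qed

lemma pos_def_fun_scaleR:
  assumes "pos_def_fun f" "0 \<le> a"
  shows "pos_def_fun (\<lambda>x. a *\<^sub>R f x)"
  unfolding pos_def_fun_def Let_def
proof (intro allI)
  fix n :: nat and x :: "nat \<Rightarrow> real" and z :: "nat \<Rightarrow> complex"
  let ?Q = "\<lambda>g. \<Sum>i\<in>{1..n}. \<Sum>j\<in>{1..n}. g (x i - x j) * z i * cnj (z j)"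
  have "?Q (\<lambda>y. a *\<^sub>R f y) = complex_of_real a * ?Q f"
    by (simp add: sum_distrib_left scaleR_conv_of_real mult_ac)
  moreover have "?Q f \<in> \<real> \<and> 0 \<le> Re (?Q f)"
    using assms(1) unfolding pos_def_fun_def Let_def by blast
  ultimately show "?Q (\<lambda>y. a *\<^sub>R f y) \<in> \<real> \<and> 0 \<le> Re (?Q (\<lambda>y. a *\<^sub>R f y))"
    using assms(2) by auto
qed

lemma pos_def_fun_sum:
  assumes "finite I" "\<And>i. i \<in> I \<Longrightarrow> pos_def_fun (f i)" "\<And>i. i \<in> I \<Longrightarrow> 0 \<le> a i"
  shows "pos_def_fun (\<lambda>x. \<Sum>i\<in>I. a i *\<^sub>R f i x)"
  using assms
proof (induction I rule: finite_induct)
  case empty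
  thus ?case by (simp add: pos_def_fun_zero)
next
  case (insert i I)
  hence "pos_def_fun (\<lambda>x. a i *\<^sub>R f i x + (\<Sum>i\<in>I. a i *\<^sub>R f i x))"
    by (intro pos_def_fun_add pos_def_fun_scaleR) auto
  thus ?case using insert by simp
qed

lemma lipschitz_on_sum:
  fixes f :: "'i \<Rightarrow> 'a::metric_space \<Rightarrow> 'b::real_normed_vector"
  assumes "finite I" "\<And>i. i \<in> I \<Longrightarrow> (L i)-lipschitz_on U (f i)"
  shows "(\<Sum>i\<in>I. L i)-lipschitz_on U (\<lambda>x. \<Sum>i\<in>I. f i x)"
  using assms
proof (induction I rule: finite_induct)
  case empty
  thus ?case using lipschitz_on_constant[of U 0] by simp
next
  case (insert i I)
  hence "(L i + (\<Sum>i\<in>I. L i))-lipschitz_on U (\<lambda>x. f i x + (\<Sum>i\<in>I. f i x))"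
    by (intro lipschitz_on_add) auto
  thus ?case using insert by simp
qed

section \<open>Fejer measures\<close>

lemma has_vector_derivative_iexp_linear:
  "((\<lambda>\<xi>. iexp (w * \<xi>)) has_vector_derivative (\<i> * complex_of_real w) * iexp (w * x)) (at x within S)"
proof -
  have "((\<lambda>\<xi>. w * \<xi>) has_vector_derivative w) (at x within S)"
    by (auto intro!: derivative_eq_intros simp flip: has_real_derivative_iff_has_vector_derivative)
  from vector_diff_chain_within[OF this has_vector_derivative_iexp]
  show ?thesis by (simp add: o_def scaleR_conv_of_real mult_ac)
qed

lemma has_integral_iexp_linear:
  fixes w a b :: real
  assumes "w \<noteq> 0" "a \<le> b"
  shows "((\<lambda>\<xi>. iexp (w * \<xi>)) has_integral (iexp (w * b) - iexp (w * a)) / (\<i> * w)) {a..b}"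
proof -
  have "((\<lambda>\<xi>. iexp (w * \<xi>) / (\<i> * w)) has_vector_derivative iexp (w * x)) (at x within {a..b})" for x
    using has_vector_derivative_divide[OF has_vector_derivative_iexp_linear[of w x "{a..b}"], of "\<i> * w"] assms(1)
    by simp
  from fundamental_theorem_of_calculus[OF assms(2) this]
  show ?thesis by (simp add: diff_divide_distrib)
qed

lemma has_integral_iexp_period:
  fixes n :: int and d :: real
  assumes "d > 0"
  shows "((\<lambda>\<xi>. iexp (of_int n * d * \<xi>)) has_integral (if n = 0 then 2 * pi / d else 0)) {-pi/d..pi/d}"
proof (cases "n = 0")
  case True
  with has_integral_const_real[of "1::complex" "-pi/d" "pi/d"] assms
  show ?thesis by (simp add: field_simps scaleR_conv_of_real)
next
  case False
  have "sin (of_int n * pi) = 0"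
    using sin_times_pi_eq_0[of "of_int n"] by simp
  hence "iexp (of_int n * d * (pi / d)) = iexp (of_int n * d * (- pi / d))"
    using assms by (simp add: complex_eq_iff Re_exp Im_exp)
  with has_integral_iexp_linear[of "of_int n * d" "-pi/d" "pi/d"] False assms
  show ?thesis by simp
qed

lemma iexp_mult_cnj_iexp: "iexp a * cnj (iexp b) = iexp (a - b)"
  by (simp add: exp_cnj exp_diff exp_add[symmetric] algebra_simps)

text \<open>fejer_measure g M d is the Fejer-smoothed spectral measure, on the circle [-pi/d, pi/d],
  of the positive definite sequence m \<mapsto> g (m d) (Herglotz's theorem).\<close>

definition fejer_sum :: "(real \<Rightarrow> complex) \<Rightarrow> nat \<Rightarrow> real \<Rightarrow> real \<Rightarrow> complex" where
  "fejer_sum g M d \<xi> = (\<Sum>j<M. \<Sum>k<M. g ((real j - real k) * d) * iexp ((real j - real k) * d * \<xi>))"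

definition fejer_density :: "(real \<Rightarrow> complex) \<Rightarrow> nat \<Rightarrow> real \<Rightarrow> real \<Rightarrow> real" where
  "fejer_density g M d \<xi> = indicator {-pi/d..pi/d} \<xi> * (d / (2 * pi * M)) * Re (fejer_sum g M d \<xi>)"

definition fejer_measure :: "(real \<Rightarrow> complex) \<Rightarrow> nat \<Rightarrow> real \<Rightarrow> real measure" where
  "fejer_measure g M d = density lborel (\<lambda>\<xi>. ennreal (fejer_density g M d \<xi>))"

lemma fejer_sum_nonneg:
  assumes "pos_def_fun g"
  shows "fejer_sum g M d \<xi> \<in> \<real> \<and> 0 \<le> Re (fejer_sum g M d \<xi>)"
proof -
  have "fejer_sum g M d \<xi> = (\<Sum>j<M. \<Sum>k<M. g (real j * d - real k * d) *
      iexp (real j * d * \<xi>) * cnj (iexp (real k * d * \<xi>)))"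
    unfolding fejer_sum_def mult.assoc[of _ "iexp _"] iexp_mult_cnj_iexp
    by (simp add: algebra_simps)
  thus ?thesis
    using pos_def_fun_quadratic_form[OF assms, where x="\<lambda>j. real j * d" and z="\<lambda>j. iexp (real j * d * \<xi>)"]
    by simp
qed

lemma continuous_on_fejer_sum: "continuous_on UNIV (fejer_sum g M d)"
  unfolding fejer_sum_def by (intro continuous_intros)

lemma borel_measurable_fejer_density: "fejer_density g M d \<in> borel_measurable borel"
proof -
  have "(\<lambda>\<xi>. Re (fejer_sum g M d \<xi>)) \<in> borel_measurable borel"
    by (intro borel_measurable_continuous_onI continuous_intros
        continuous_on_fejer_sum[THEN continuous_on_compose2]) auto
  thus ?thesis unfolding fejer_density_def by measurable
qed

lemma fejer_density_nonneg: "pos_def_fun g \<Longrightarrow> d > 0 \<Longrightarrow> 0 \<le> fejer_density g M d \<xi>"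
  unfolding fejer_density_def using fejer_sum_nonneg[of g M d \<xi>]
  by (auto simp: indicator_def)

lemma AE_fejer_measure_support: "AE \<xi> in fejer_measure g M d. \<bar>\<xi>\<bar> \<le> pi / d"
proof -
  have "AE \<xi> in lborel. 0 < ennreal (fejer_density g M d \<xi>) \<longrightarrow> \<bar>\<xi>\<bar> \<le> pi / d"
    by (intro AE_I2) (auto simp: fejer_density_def indicator_def)
  thus ?thesis unfolding fejer_measure_def
    by (subst AE_density) (auto intro: measurable_compose[OF borel_measurable_fejer_density])
qed

lemma has_integral_fejer_sum_iexp:
  fixes g :: "real \<Rightarrow> complex" and m :: int and d :: real
  assumes "d > 0"
  shows "((\<lambda>\<xi>. fejer_sum g M d \<xi> * iexp (m * d * \<xi>)) has_integral
    (\<Sum>j<M. \<Sum>k<M. if int k = int j + m then 2 * pi / d * g ((real j - real k) * d) else 0)) {-pi/d..pi/d}"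
proof -
  have "fejer_sum g M d \<xi> * iexp (m * d * \<xi>)
      = (\<Sum>j<M. \<Sum>k<M. g ((real j - real k) * d) * iexp (of_int (int j - int k + m) * d * \<xi>))" for \<xi>
    unfolding fejer_sum_def sum_distrib_right
    by (intro sum.cong refl) (simp add: exp_add[symmetric] algebra_simps)
  moreover have "((\<lambda>\<xi>. \<Sum>j<M. \<Sum>k<M. g ((real j - real k) * d) * iexp (of_int (int j - int k + m) * d * \<xi>))
      has_integral (\<Sum>j<M. \<Sum>k<M. g ((real j - real k) * d) * (if int j - int k + m = 0 then 2 * pi / d else 0)))
      {-pi/d..pi/d}"
    by (intro has_integral_sum finite_lessThan has_integral_mult_right has_integral_iexp_period assms)
  moreover have "int j - int k + m = 0 \<longleftrightarrow> int k = int j + m" for j k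
    by linarith
  ultimately show ?thesis
    by (simp add: if_distrib mult.commute cong: if_cong)
qed

lemma char_fejer_measure:
  fixes g :: "real \<Rightarrow> complex" and m :: int and d :: real
  assumes pd: "pos_def_fun g" and d: "d > 0" and M: "M > 0"
  shows "char (fejer_measure g M d) (m * d) =
    (\<Sum>j<M. \<Sum>k<M. if int k = int j + m then g ((real j - real k) * d) / M else 0)"
proof -
  let ?S = "{-pi/d..pi/d}" and ?f = "\<lambda>\<xi>. fejer_sum g M d \<xi> * iexp (m * d * \<xi>)"
  have density_eq: "fejer_density g M d \<xi> *\<^sub>R iexp (m * d * \<xi>)
      = (d / (2 * pi * M)) *\<^sub>R (indicator ?S \<xi> *\<^sub>R ?f \<xi>)" for \<xi>
  proof -
    have "complex_of_real (Re (fejer_sum g M d \<xi>)) = fejer_sum g M d \<xi>"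
      using fejer_sum_nonneg[OF pd] by (simp add: of_real_Re)
    thus ?thesis
      unfolding fejer_density_def by (simp add: scaleR_conv_of_real)
  qed
  have "char (fejer_measure g M d) (m * d) = (LINT \<xi>|lborel. fejer_density g M d \<xi> *\<^sub>R iexp (m * d * \<xi>))"
    unfolding char_def fejer_measure_def
    by (rule integral_density) (auto intro!: borel_measurable_fejer_density fejer_density_nonneg[OF pd d])
  also have "\<dots> = (d / (2 * pi * M)) *\<^sub>R (LINT \<xi>:?S|lborel. ?f \<xi>)"
    unfolding density_eq set_lebesgue_integral_def by (rule integral_scaleR_right)
  also have "(LINT \<xi>:?S|lborel. ?f \<xi>) = integral ?S ?f"
    by (intro set_borel_integral_eq_integral borel_integrable_atLeastAtMost' continuous_intros
        continuous_on_fejer_sum[THEN continuous_on_compose2]) auto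
  also have "\<dots> = (\<Sum>j<M. \<Sum>k<M. if int k = int j + m then 2 * pi / d * g ((real j - real k) * d) else 0)"
    by (rule integral_unique[OF has_integral_fejer_sum_iexp[OF d]])
  also have "(d / (2 * pi * M)) *\<^sub>R \<dots>
      = (\<Sum>j<M. \<Sum>k<M. if int k = int j + m then g ((real j - real k) * d) / M else 0)"
    unfolding scaleR_sum_right
    by (intro sum.cong refl) (use d M in \<open>auto simp: scaleR_conv_of_real field_simps\<close>)
  finally show ?thesis .
qed

lemma sum_lessThan_if_eq_shift:
  fixes m :: int and F :: "real \<Rightarrow> 'a::comm_monoid_add"
  shows "(\<Sum>k<M. if int k = int j + m then F (real j - real k) else 0)
       = (if 0 \<le> int j + m \<and> int j + m < int M then F (- m) else 0)"
proof (cases "0 \<le> int j + m")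
  case True
  have "(\<Sum>k<M. if int k = int j + m then F (real j - real k) else 0)
      = (\<Sum>k<M. if k = nat (int j + m) then F (- m) else 0)"
  proof (intro sum.cong refl)
    fix k
    have "int k = int j + m \<longleftrightarrow> k = nat (int j + m)"
      using True by linarith
    moreover have "int k = int j + m \<Longrightarrow> real j - real k = - m"
      by linarith
    ultimately show "(if int k = int j + m then F (real j - real k) else 0)
        = (if k = nat (int j + m) then F (- m) else 0)"
      by auto
  qed
  with True show ?thesis by auto
next
  case False
  thus ?thesis by auto
qed

lemma card_shifted_window:
  fixes m :: int
  assumes "\<bar>m\<bar> \<le> int M"
  shows "real (card {j\<in>{..<M}. 0 \<le> int j + m \<and> int j + m < int M}) = real M - \<bar>m\<bar>"
proof (cases "m \<ge> 0")
  case True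
  hence "{j\<in>{..<M}. 0 \<le> int j + m \<and> int j + m < int M} = {..<nat (int M - m)}"
    by auto
  thus ?thesis using True assms by simp
next
  case False
  hence "{j\<in>{..<M}. 0 \<le> int j + m \<and> int j + m < int M} = {nat (-m)..<M}"
    by auto
  thus ?thesis using False assms by simp
qed

lemma char_fejer_measure_grid:
  fixes g :: "real \<Rightarrow> complex" and m :: int and d :: real
  assumes pd: "pos_def_fun g" and d: "d > 0" and M: "M > 0" and mM: "\<bar>m\<bar> \<le> int M"
  shows "char (fejer_measure g M d) (m * d) = g (- m * d) * of_real ((real M - \<bar>m\<bar>) / M)"
proof -
  define F where "F (x::real) = g (x * d) / M" for x
  define J where "J = {j\<in>{..<M}. 0 \<le> int j + m \<and> int j + m < int M}"
  have "char (fejer_measure g M d) (m * d) =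
      (\<Sum>j<M. \<Sum>k<M. if int k = int j + m then F (real j - real k) else 0)"
    unfolding F_def by (rule char_fejer_measure[OF pd d M])
  also have "\<dots> = (\<Sum>j<M. if 0 \<le> int j + m \<and> int j + m < int M then F (- m) else 0)"
    by (simp only: sum_lessThan_if_eq_shift)
  also have "\<dots> = of_nat (card J) * F (- m)"
    unfolding J_def by (simp add: sum.inter_filter[symmetric])
  also have "\<dots> = g (- m * d) * of_real ((real M - \<bar>m\<bar>) / M)"
    unfolding J_def F_def card_shifted_window[OF mM, symmetric] by simp
  finally show ?thesis .
qed

lemma real_distribution_fejer_measure:
  assumes pd: "pos_def_fun g" and g0: "g 0 = 1" and d: "d > 0" and M: "M > 0"
  shows "real_distribution (fejer_measure g M d)"
proof -
  have space: "space (fejer_measure g M d) = UNIV"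
    unfolding fejer_measure_def by simp
  have "complex_of_real (measure (fejer_measure g M d) UNIV) = char (fejer_measure g M d) 0"
    unfolding char_def by (simp add: space scaleR_conv_of_real)
  also have "\<dots> = 1"
    using char_fejer_measure_grid[OF pd d M, of 0] g0 M by simp
  finally have "measure (fejer_measure g M d) UNIV = 1"
    by simp
  moreover from this have "emeasure (fejer_measure g M d) UNIV \<noteq> \<infinity>"
    by (auto simp: measure_def)
  ultimately have "emeasure (fejer_measure g M d) UNIV = 1"
    by (simp add: emeasure_eq_ennreal_measure)
  hence "prob_space (fejer_measure g M d)"
    by (intro prob_spaceI) (simp add: space)
  thus ?thesis
    by (simp add: real_distribution_def real_distribution_axioms_def fejer_measure_def)
qed

section \<open>Uniform tail bounds\<close>

lemma x_cos_le_sin: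
  fixes y :: real
  assumes "0 \<le> y" "y \<le> pi"
  shows "y * cos y \<le> sin y"
proof -
  have "\<exists>D. ((\<lambda>y. sin y - y * cos y) has_real_derivative D) (at u) \<and> 0 \<le> D"
    if "0 \<le> u" "u \<le> y" for u
  proof (intro exI conjI)
    show "((\<lambda>y. sin y - y * cos y) has_real_derivative u * sin u) (at u)"
      by (auto intro!: derivative_eq_intros simp: algebra_simps)
    show "0 \<le> u * sin u"
      using that assms by (intro mult_nonneg_nonneg sin_ge_zero) auto
  qed
  from DERIV_nonneg_imp_nondecreasing[OF assms(1) this]
  show ?thesis by simp
qed

lemma quarter_le_sin:
  fixes y :: real
  assumes "0 \<le> y" "y \<le> pi/2"
  shows "y / 4 \<le> sin y"
proof (cases "y \<le> pi/3")
  case True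
  have "1/2 \<le> cos y"
    using cos_monotone_0_pi_le[of y "pi/3"] True assms by (simp add: cos_60)
  hence "y / 2 \<le> y * cos y"
    using assms by (metis mult_left_mono times_divide_eq_right mult_1_right)
  thus ?thesis
    using x_cos_le_sin[of y] assms by auto
next
  case False
  have "sqrt 3 / 2 \<le> sin y"
    using sin_monotone_2pi_le[of "pi/3" y] False assms by (simp add: sin_60)
  moreover have "1 \<le> sqrt 3" "y / 4 \<le> 1/2"
    using assms pi_half_less_two by auto
  ultimately show ?thesis by linarith
qed

lemma abs_sin_half_ge:
  fixes x :: real
  assumes "\<bar>x\<bar> \<le> pi"
  shows "\<bar>x\<bar> / 8 \<le> \<bar>sin (x/2)\<bar>"
proof -
  have "\<bar>sin (x/2)\<bar> = sin (\<bar>x\<bar>/2)"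
    using assms sin_ge_zero[of "\<bar>x\<bar>/2"] by (cases "x \<ge> 0") auto
  with quarter_le_sin[of "\<bar>x\<bar>/2"] assms show ?thesis
    by simp
qed

lemma sin_half_mult_sum_cos:
  fixes x :: real
  shows "2 * sin (x/2) * (\<Sum>m\<in>{1..K}. cos (real m * x)) = sin ((real K + 1/2) * x) - sin (x/2)"
proof (induction K)
  case 0
  thus ?case by simp
next
  case (Suc K)
  have "2 * sin (x/2) * (\<Sum>m\<in>{1..Suc K}. cos (real m * x))
      = sin ((real K + 1/2) * x) - sin (x/2) + 2 * (cos ((real K + 1) * x) * sin (x/2))"
    using Suc.IH by (simp add: algebra_simps)
  also have "\<dots> = sin ((real K + 1/2) * x) - sin (x/2)
      + (sin ((real K + 1) * x + x/2) - sin ((real K + 1) * x - x/2))"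
    unfolding cos_times_sin by simp
  also have "(real K + 1) * x - x/2 = (real K + 1/2) * x"
    by (simp add: algebra_simps)
  also have "(real K + 1) * x + x/2 = (real (Suc K) + 1/2) * x"
    by (simp add: algebra_simps)
  finally show ?case by simp
qed

lemma abs_sum_cos_le:
  fixes x :: real
  assumes "x \<noteq> 0" "\<bar>x\<bar> \<le> pi"
  shows "\<bar>\<Sum>m\<in>{1..K}. cos (real m * x)\<bar> \<le> 8 / \<bar>x\<bar>"
proof -
  let ?S = "\<bar>\<Sum>m\<in>{1..K}. cos (real m * x)\<bar>"
  have "\<bar>x\<bar> / 4 * ?S \<le> \<bar>2 * sin (x/2)\<bar> * ?S"
    using abs_sin_half_ge[OF assms(2)] by (intro mult_right_mono) auto
  also have "\<dots> \<le> 2"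
    unfolding abs_mult[symmetric] sin_half_mult_sum_cos
    using abs_sin_le_one[of "(real K + 1/2) * x"] abs_sin_le_one[of "x/2"] by linarith
  finally show ?thesis
    using assms(1) by (simp add: field_simps)
qed

lemma indicator_le_one_minus_mean_cos:
  fixes x :: real
  assumes K: "K \<ge> 1" and x: "\<bar>x\<bar> \<le> pi"
  shows "indicator {x. 16 / K \<le> \<bar>x\<bar>} x / 2 \<le> 1 - (\<Sum>m\<in>{1..K}. cos (real m * x)) / K"
proof (cases "16 / K \<le> \<bar>x\<bar>")
  case True
  hence "x \<noteq> 0"
    using K by (auto simp: field_simps)
  hence "(\<Sum>m\<in>{1..K}. cos (real m * x)) \<le> 8 / \<bar>x\<bar>"
    using abs_sum_cos_le[OF _ x, of K] by linarith
  also have "8 / \<bar>x\<bar> \<le> real K / 2"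
    using True \<open>x \<noteq> 0\<close> K by (simp add: field_simps)
  finally show ?thesis
    using True K by (simp add: field_simps)
next
  case False
  have "(\<Sum>m\<in>{1..K}. cos (real m * x)) \<le> (\<Sum>m\<in>{1..K}. 1)"
    by (intro sum_mono) simp
  with False K show ?thesis
    by (simp add: field_simps)
qed

lemma (in real_distribution) integral_one_minus_mean_cos:
  "(LINT \<xi>|M. 1 - (\<Sum>m\<in>{1..K}. cos (real m * (d * \<xi>))) / K)
    = 1 - (\<Sum>m\<in>{1..K}. Re (char M (real m * d))) / K"
proof -
  have cos_integrable: "integrable M (\<lambda>\<xi>. cos (real m * (d * \<xi>)))" for m
    by (rule integrable_const_bound[where B=1]) auto
  have "(LINT \<xi>|M. cos (real m * (d * \<xi>))) = Re (char M (real m * d))" for m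
  proof -
    have "complex_integrable M (\<lambda>\<xi>. iexp (real m * d * \<xi>))"
      by (rule integrable_const_bound[where B=1]) auto
    from integral_Re[OF this] show ?thesis
      unfolding char_def by (simp add: Re_exp mult.assoc)
  qed
  with cos_integrable show ?thesis
    by (simp add: Bochner_Integration.integral_diff Bochner_Integration.integral_sum
        Bochner_Integration.integrable_sum prob_space flip: space_eq_univ)
qed

lemma norm_one_minus_char_fejer_measure_le:
  fixes g :: "real \<Rightarrow> complex" and m M :: nat
  assumes pd: "pos_def_fun g" and g0: "g 0 = 1" and L: "L-lipschitz_on UNIV g"
    and d: "d > 0" and mM: "m \<le> M" "M > 0" and u: "real m * d \<le> u" "real m / M \<le> u"
  shows "cmod (1 - char (fejer_measure g M d) (real m * d)) \<le> L * u + (1 + L * u) * u"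
proof -
  let ?g = "g (- real m * d)"
  have "0 \<le> L"
    using L lipschitz_on_nonneg by blast
  have "cmod (1 - ?g) \<le> L * (real m * d)"
    using lipschitz_on_normD[OF L, of 0 "- real m * d"] d g0 by simp
  also have "\<dots> \<le> L * u"
    using u \<open>0 \<le> L\<close> by (intro mult_left_mono)
  finally have near_1: "cmod (1 - ?g) \<le> L * u" .
  hence bounded: "cmod ?g \<le> 1 + L * u"
    using norm_triangle_ineq4[of 1 "1 - ?g"] by simp
  have "char (fejer_measure g M d) (real m * d) = ?g * of_real ((real M - real m) / M)"
    using char_fejer_measure_grid[OF pd d mM(2), of "int m"] mM by simp
  hence "1 - char (fejer_measure g M d) (real m * d) = (1 - ?g) + ?g * (real m / M)"
    using mM by (simp add: field_simps)
  hence "cmod (1 - char (fejer_measure g M d) (real m * d)) \<le> cmod (1 - ?g) + cmod ?g * (real m / M)"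
    by (metis norm_triangle_ineq norm_mult norm_of_real abs_of_nonneg of_nat_0_le_iff divide_nonneg_nonneg)
  also have "\<dots> \<le> L * u + (1 + L * u) * u"
    using near_1 bounded u order_trans[OF norm_ge_zero bounded]
    by (intro add_mono mult_mono) auto
  finally show ?thesis .
qed

lemma fejer_measure_tail:
  fixes g :: "real \<Rightarrow> complex" and K M :: nat
  assumes pd: "pos_def_fun g" and g0: "g 0 = 1" and L: "L-lipschitz_on UNIV g"
    and d: "d > 0" and K: "1 \<le> K" "K \<le> M" and u: "real K * d \<le> u" "real K / M \<le> u"
  shows "measure (fejer_measure g M d) {\<xi>. 16 / (real K * d) \<le> \<bar>\<xi>\<bar>} \<le> 2 * (L * u + (1 + L * u) * u)"
proof -
  let ?\<nu> = "fejer_measure g M d"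
  interpret real_distribution ?\<nu>
    using K by (intro real_distribution_fejer_measure[OF pd g0 d]) auto
  define B where "B = L * u + (1 + L * u) * u"
  define S where "S = {\<xi>::real. 16 / (real K * d) \<le> \<bar>\<xi>\<bar>}"
  define F where "F \<xi> = 1 - (\<Sum>m\<in>{1..K}. cos (real m * (d * \<xi>))) / K" for \<xi>
  have F_integrable: "integrable ?\<nu> F"
    unfolding F_def by (intro Bochner_Integration.integrable_diff integrable_divide
        Bochner_Integration.integrable_sum integrable_const_bound[where B=1]) auto
  have "1 - B \<le> Re (char ?\<nu> (real m * d))" if "m \<in> {1..K}" for m
  proof -
    have "real m * d \<le> real K * d" "real m / M \<le> real K / M"
      using that d by (auto intro: mult_right_mono divide_right_mono)
    hence "Re (1 - char ?\<nu> (real m * d)) \<le> B"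
      unfolding B_def using that K u
      by (intro order_trans[OF complex_Re_le_cmod] norm_one_minus_char_fejer_measure_le[OF pd g0 L d]) auto
    thus ?thesis by simp
  qed
  hence "real K * (1 - B) \<le> (\<Sum>m\<in>{1..K}. Re (char ?\<nu> (real m * d)))"
    using sum_mono[of "{1..K}" "\<lambda>_. 1 - B"] by simp
  hence F_integral: "(LINT \<xi>|?\<nu>. F \<xi>) \<le> B"
    unfolding F_def integral_one_minus_mean_cos using K by (simp add: field_simps)
  have "AE \<xi> in ?\<nu>. indicator S \<xi> / 2 \<le> F \<xi>"
    using AE_fejer_measure_support
  proof eventually_elim
    case (elim \<xi>)
    hence "\<bar>d * \<xi>\<bar> \<le> pi"
      using d by (simp add: abs_mult field_simps)
    moreover have "\<xi> \<in> S \<longleftrightarrow> 16 / K \<le> \<bar>d * \<xi>\<bar>"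
      using d K unfolding S_def by (simp add: abs_mult field_simps)
    ultimately show ?case
      using indicator_le_one_minus_mean_cos[OF K(1), of "d * \<xi>"] unfolding F_def
      by (simp add: indicator_def)
  qed
  hence "(LINT \<xi>|?\<nu>. indicator S \<xi> / 2) \<le> (LINT \<xi>|?\<nu>. F \<xi>)"
    unfolding S_def
    by (intro integral_mono_AE F_integrable integrable_divide integrable_real_indicator)
       (auto simp: emeasure_eq_measure)
  hence "measure ?\<nu> S / 2 \<le> B"
    using F_integral unfolding S_def by simp
  thus ?thesis
    unfolding S_def B_def by simp
qed

section \<open>A tight family of Fejer measures\<close>

text \<open>Mesh 2^-N and 4^N points: every dyadic rational t is eventually a grid point m d with
  |m|/M \<rightarrow> 0, so the characteristic functions converge to g (-t) there.\<close>

definition dyadic_fejer_measure :: "(real \<Rightarrow> complex) \<Rightarrow> nat \<Rightarrow> real measure" where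
  "dyadic_fejer_measure g N = fejer_measure g (4^N) (1 / 2^N)"

lemma real_distribution_dyadic_fejer_measure:
  "pos_def_fun g \<Longrightarrow> g 0 = 1 \<Longrightarrow> real_distribution (dyadic_fejer_measure g N)"
  unfolding dyadic_fejer_measure_def by (rule real_distribution_fejer_measure) auto

lemma measure_dyadic_fejer_measure_outside_support:
  assumes "pi * 2^N < R"
  shows "measure (dyadic_fejer_measure g N) {\<xi>. R \<le> \<bar>\<xi>\<bar>} = 0"
proof -
  have "AE \<xi> in dyadic_fejer_measure g N. \<not> R \<le> \<bar>\<xi>\<bar>"
    using AE_fejer_measure_support[where g=g and M="4^N" and d="1/2^N"]
    unfolding dyadic_fejer_measure_def by eventually_elim (use assms in simp)
  hence "emeasure (dyadic_fejer_measure g N) {\<xi> \<in> space (dyadic_fejer_measure g N). R \<le> \<bar>\<xi>\<bar>} = 0"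
    by (rule emeasure_eq_0_AE)
  thus ?thesis
    by (simp add: measure_def dyadic_fejer_measure_def fejer_measure_def)
qed

lemma dyadic_fejer_measure_tail:
  fixes g :: "real \<Rightarrow> complex"
  assumes pd: "pos_def_fun g" and g0: "g 0 = 1" and L: "L-lipschitz_on UNIV g"
  shows "measure (dyadic_fejer_measure g N) {\<xi>. 16 * 2^q \<le> \<bar>\<xi>\<bar>} \<le> 2 * (2 * L + 1) / 2^q"
proof (cases "q \<le> N")
  case True
  define k where "k = N - q"
  define u :: real where "u = 1 / 2^q"
  have N: "N = q + k"
    using True by (simp add: k_def)
  have "(2::nat)^k \<le> 2^N"
    unfolding N by (rule power_increasing) auto
  also have "(2::nat)^N \<le> 4^N"
    by (rule power_mono) auto
  finally have "2^k \<le> (4::nat)^N" .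
  moreover have "real (2^k) / real (4^N) \<le> u"
  proof -
    have "real (2^k) / real (4^N) = u / 2^N"
      unfolding u_def N by (simp add: power_add power_mult_distrib[symmetric] field_simps)
    also have "\<dots> \<le> u / 1"
      unfolding u_def by (rule divide_left_mono) auto
    finally show ?thesis by simp
  qed
  moreover have "real (2^k) * (1 / 2^N) = u"
    unfolding u_def N by (simp add: power_add)
  ultimately have "measure (fejer_measure g (4^N) (1 / 2^N)) {\<xi>. 16 / (real (2^k) * (1 / 2^N)) \<le> \<bar>\<xi>\<bar>}
      \<le> 2 * (L * u + (1 + L * u) * u)"
    by (intro fejer_measure_tail[OF pd g0 L]) auto
  moreover have "16 / (real (2^k) * (1 / 2^N)) = 16 * 2^q"
    unfolding N by (simp add: power_add)
  moreover have "L * u * u \<le> L * u"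
    using lipschitz_on_nonneg[OF L] by (intro mult_left_le) (auto simp: u_def)
  hence "2 * (L * u + (1 + L * u) * u) \<le> 2 * (2 * L + 1) * u"
    by (simp add: algebra_simps)
  ultimately show ?thesis
    unfolding dyadic_fejer_measure_def u_def by simp
next
  case False
  have "pi * 2^N < 4 * 2^N"
    using pi_less_4 by simp
  also have "(2::real)^N \<le> 2^q"
    using False by (intro power_increasing) auto
  hence "(4::real) * 2^N \<le> 16 * 2^q"
    using zero_le_power[of "2::real" q] by linarith
  finally have "measure (dyadic_fejer_measure g N) {\<xi>. 16 * 2^q \<le> \<bar>\<xi>\<bar>} = 0"
    by (rule measure_dyadic_fejer_measure_outside_support)
  moreover have "0 \<le> 2 * (2 * L + 1) / (2::real)^q"
    using lipschitz_on_nonneg[OF L] by simp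
  ultimately show ?thesis by simp
qed

lemma tight_dyadic_fejer_measure:
  fixes g :: "real \<Rightarrow> complex"
  assumes pd: "pos_def_fun g" and g0: "g 0 = 1" and L: "L-lipschitz_on UNIV g"
  shows "tight (dyadic_fejer_measure g)"
  unfolding tight_def
proof (intro conjI allI impI)
  show "real_distribution (dyadic_fejer_measure g N)" for N
    by (rule real_distribution_dyadic_fejer_measure[OF pd g0])
  fix \<epsilon> :: real
  assume "\<epsilon> > 0"
  obtain q where "2 * (2 * L + 1) / \<epsilon> < 2^q"
    using real_arch_pow[of 2 "2 * (2 * L + 1) / \<epsilon>"] by auto
  with \<open>\<epsilon> > 0\<close> have q: "2 * (2 * L + 1) / 2^q < \<epsilon>"
    by (simp add: field_simps)
  define R :: real where "R = 16 * 2^q"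
  show "\<exists>a b. a < b \<and> (\<forall>N. 1 - \<epsilon> < measure (dyadic_fejer_measure g N) {a<..b})"
  proof (intro exI conjI allI)
    show "-R < R"
      unfolding R_def by simp
    fix N
    interpret real_distribution "dyadic_fejer_measure g N"
      by (rule real_distribution_dyadic_fejer_measure[OF pd g0])
    have "measure (dyadic_fejer_measure g N) (UNIV - {-R<..R})
        \<le> measure (dyadic_fejer_measure g N) {\<xi>. R \<le> \<bar>\<xi>\<bar>}"
      by (intro finite_measure_mono) auto
    also have "\<dots> \<le> 2 * (2 * L + 1) / 2^q"
      unfolding R_def by (rule dyadic_fejer_measure_tail[OF pd g0 L])
    finally show "1 - \<epsilon> < measure (dyadic_fejer_measure g N) {-R<..R}"
      using q prob_compl[of "{-R<..R}"] by (simp add: space_eq_univ)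
  qed
qed

lemma char_dyadic_fejer_measure:
  fixes g :: "real \<Rightarrow> complex" and p :: int
  assumes pd: "pos_def_fun g" and "q \<le> N" and p: "\<bar>p\<bar> \<le> 2^(N - q)"
  shows "char (dyadic_fejer_measure g N) (p / 2^q) = g (- (p / 2^q)) * of_real (1 - \<bar>p\<bar> / (2^q * 2^N))"
proof -
  define k where "k = N - q"
  define m where "m = p * 2^k"
  have N: "N = q + k"
    using assms(2) by (simp add: k_def)
  have "\<bar>m\<bar> \<le> 2^k * 2^k"
    unfolding m_def using p by (simp add: abs_mult k_def mult_right_mono)
  also have "\<dots> \<le> 2^N * 2^N"
    unfolding N by (intro mult_mono power_increasing) auto
  also have "\<dots> = int (4^N)"
    by (simp add: power_mult_distrib[symmetric])
  finally have "\<bar>m\<bar> \<le> int (4^N)" .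
  from char_fejer_measure_grid[OF pd _ _ this, of "1 / 2^N"]
  have "char (dyadic_fejer_measure g N) (m * (1 / 2^N)) = g (- m * (1 / 2^N)) * of_real ((4^N - \<bar>m\<bar>) / 4^N)"
    unfolding dyadic_fejer_measure_def by simp
  moreover have scale: "m * (1 / 2^N) = p / 2^q"
    unfolding m_def N by (simp add: power_add)
  moreover from scale have "- m * (1 / 2^N) = - (p / 2^q)"
    by simp
  moreover have "\<bar>m\<bar> / 4^N = \<bar>p\<bar> / (2^q * 2^N)"
  proof -
    have "(4::real)^N = 2^N * 2^N"
      by (simp add: power_mult_distrib[symmetric])
    also have "\<dots> = 2^q * 2^N * 2^k"
      unfolding N by (simp add: power_add)
    finally have "(4::real)^N = 2^q * 2^N * 2^k" .
    thus ?thesis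
      unfolding m_def by (simp add: abs_mult)
  qed
  hence "(4^N - \<bar>m\<bar>) / 4^N = 1 - \<bar>p\<bar> / (2^q * 2^N)"
    by (simp add: diff_divide_distrib)
  ultimately show ?thesis
    by (simp only: of_int_minus)
qed

lemma char_dyadic_fejer_measure_tendsto:
  fixes g :: "real \<Rightarrow> complex" and p :: int
  assumes pd: "pos_def_fun g"
  shows "(\<lambda>N. char (dyadic_fejer_measure g N) (p / 2^q)) \<longlonglongrightarrow> g (- (p / 2^q))"
proof -
  have "\<forall>\<^sub>F N in sequentially. g (- (p / 2^q)) * of_real (1 - \<bar>p\<bar> / (2^q * 2^N))
      = char (dyadic_fejer_measure g N) (p / 2^q)"
    unfolding eventually_sequentially
  proof (intro exI allI impI)
    fix N
    assume N: "q + nat \<bar>p\<bar> \<le> N"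
    have "\<bar>p\<bar> \<le> int (N - q)"
      using N by linarith
    also have "\<dots> \<le> 2^(N - q)"
      using less_exp[of "N - q"] by (metis less_imp_le of_nat_less_iff of_nat_numeral of_nat_power)
    finally show "g (- (p / 2^q)) * of_real (1 - \<bar>p\<bar> / (2^q * 2^N)) = char (dyadic_fejer_measure g N) (p / 2^q)"
      using N by (simp add: char_dyadic_fejer_measure[OF pd])
  qed
  moreover have "(\<lambda>N. \<bar>p\<bar> / (2^q * 2^N)) \<longlonglongrightarrow> (0::real)"
  proof -
    have "(\<lambda>N. \<bar>p\<bar> / 2^q * (1/2)^N) \<longlonglongrightarrow> (0::real)"
      by (intro tendsto_mult_right_zero LIMSEQ_realpow_zero) auto
    thus ?thesis
      by (simp add: power_divide)
  qed
  hence "(\<lambda>N. g (- (p / 2^q)) * of_real (1 - \<bar>p\<bar> / (2^q * 2^N)))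
      \<longlonglongrightarrow> g (- (p / 2^q)) * of_real (1 - 0)"
    by (intro tendsto_intros)
  ultimately show ?thesis
    by (simp add: Lim_transform_eventually)
qed

lemma floor_dyadic_tendsto: "(\<lambda>k. of_int \<lfloor>t * 2^k\<rfloor> / 2^k) \<longlonglongrightarrow> (t::real)"
proof (rule tendsto_sandwich[of "\<lambda>k. t - (1/2)^k" _ _ "\<lambda>_. t"])
  have "(t * 2^k - 1) / 2^k \<le> of_int \<lfloor>t * 2^k\<rfloor> / 2^k" for k :: nat
    by (intro divide_right_mono) (linarith, simp)
  thus "\<forall>\<^sub>F k in sequentially. t - (1/2)^k \<le> of_int \<lfloor>t * 2^k\<rfloor> / 2^k"
    by (intro always_eventually allI) (simp add: field_simps power_divide)
  show "\<forall>\<^sub>F k in sequentially. of_int \<lfloor>t * 2^k\<rfloor> / 2^k \<le> t"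
    by (simp add: field_simps)
  show "(\<lambda>k. t - (1/2::real)^k) \<longlonglongrightarrow> t"
    using tendsto_diff[OF tendsto_const LIMSEQ_realpow_zero[of "1/2::real"], of t] by simp
qed simp

section \<open>Bochner's theorem for Lipschitz functions\<close>

lemma has_integral_one_minus_cos:
  fixes u x :: real
  assumes "0 \<le> u"
  shows "((\<lambda>t. 1 - cos (t * x)) has_integral (if x = 0 then 0 else 2 * (u - sin (u * x) / x))) {-u..u}"
proof (cases "x = 0")
  case True
  thus ?thesis by simp
next
  case False
  have "((\<lambda>t. t - sin (t * x) / x) has_vector_derivative 1 - cos (t * x)) (at t within {-u..u})" for t
    using False by (auto intro!: derivative_eq_intros simp flip: has_real_derivative_iff_has_vector_derivative)
  from fundamental_theorem_of_calculus[OF _ this] assms False show ?thesis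
    by simp
qed

lemma (in real_distribution) integral_one_minus_Re_char:
  fixes u :: real
  assumes "u \<ge> 0"
  defines "h \<equiv> \<lambda>x. if x = 0 then 0 else 2 * (u - sin (u * x) / x)"
  shows "integrable M h" and "(LBINT t:{-u..u}. 1 - Re (char M t)) = (\<integral>x. h x \<partial>M)"
proof -
  interpret pair_sigma_finite M lborel ..
  define f where "f p = indicator (UNIV \<times> {-u..u}) p *\<^sub>R (1 - cos (snd p * fst p))" for p :: "real \<times> real"
  have "integrable (M \<Otimes>\<^sub>M lborel) f"
    unfolding f_def
    by (intro integrableI_bounded_set_indicator[where B=2])
       (auto simp: lborel.emeasure_pair_measure_Times ennreal_mult_less_top emeasure_eq_measure
         emeasure_lborel_Icc_eq intro!: order_trans[OF abs_triangle_ineq4])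
  hence f_integrable: "integrable (M \<Otimes>\<^sub>M lborel) (case_prod (\<lambda>x t. f (x, t)))"
    by simp
  have inner: "(LBINT t. f (x, t)) = h x" for x
  proof -
    have "(LBINT t. f (x, t)) = (LBINT t:{-u..u}. 1 - cos (t * x))"
      unfolding f_def set_lebesgue_integral_def by (simp add: indicator_times)
    also have "\<dots> = integral {-u..u} (\<lambda>t. 1 - cos (t * x))"
      by (intro set_borel_integral_eq_integral borel_integrable_atLeastAtMost' continuous_intros)
    also have "\<dots> = h x"
      unfolding h_def using has_integral_one_minus_cos[of u x] assms by (simp add: integral_unique)
    finally show ?thesis .
  qed
  have "(\<integral>x. f (x, t) \<partial>M) = indicator {-u..u} t * (1 - Re (char M t))" for t
  proof -
    have "complex_integrable M (\<lambda>x. iexp (t * x))"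
      by (rule integrable_const_bound[where B=1]) auto
    from integral_Re[OF this] have "Re (char M t) = (\<integral>x. cos (t * x) \<partial>M)"
      unfolding char_def by (simp add: Re_exp)
    moreover have "integrable M (\<lambda>x. cos (t * x))"
      by (rule integrable_const_bound[where B=1]) auto
    ultimately show ?thesis
      using prob_space unfolding f_def
      by (simp add: indicator_times Bochner_Integration.integral_diff space_eq_univ)
  qed
  hence "(LBINT t:{-u..u}. 1 - Re (char M t)) = (LBINT t. \<integral>x. f (x, t) \<partial>M)"
    by (simp add: set_lebesgue_integral_def mult.commute)
  also have "\<dots> = (\<integral>x. h x \<partial>M)"
    using Fubini_integral[OF f_integrable] inner by simp
  finally show "(LBINT t:{-u..u}. 1 - Re (char M t)) = (\<integral>x. h x \<partial>M)" .
  show "integrable M h"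
    using integrable_fst'[OF f_integrable] inner by simp
qed

lemma truncation_kernel_ge:
  fixes u x :: real
  assumes "u > 0"
  shows "u * indicator {x. 2 / u \<le> \<bar>x\<bar>} x \<le> (if x = 0 then 0 else 2 * (u - sin (u * x) / x))"
proof (cases "x = 0")
  case True
  thus ?thesis
    using assms by simp
next
  case False
  have sinc_le: "\<bar>sin (u * x) / x\<bar> \<le> u"
    using abs_sin_x_le_abs_x[of "u * x"] assms False by (auto simp: abs_mult divide_le_eq)
  have sinc_half: "sin (u * x) / x \<le> u / 2" if "2 / u \<le> \<bar>x\<bar>"
  proof -
    have "sin (u * x) / x \<le> 1 / \<bar>x\<bar>"
      using abs_sin_le_one[of "u * x"] False
      by (cases "x > 0") (auto simp: field_simps abs_if split: if_splits)
    also have "\<dots> \<le> u / 2"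
      using that assms False by (simp add: field_simps)
    finally show ?thesis .
  qed
  have "u * indicator {x. 2 / u \<le> \<bar>x\<bar>} x \<le> 2 * (u - s)"
    if "\<bar>s\<bar> \<le> u" "2 / u \<le> \<bar>x\<bar> \<Longrightarrow> s \<le> u / 2" for s
    using that by (cases "2 / u \<le> \<bar>x\<bar>") auto
  from this[OF sinc_le sinc_half] False show ?thesis
    by simp
qed

lemma (in real_distribution) measure_abs_ge_le_integral_char:
  assumes "u > 0"
  shows "u * measure M {x. 2 / u \<le> \<bar>x\<bar>} \<le> (LBINT t:{-u..u}. 1 - Re (char M t))"
proof -
  have "(\<integral>x. u * indicator {x. 2 / u \<le> \<bar>x\<bar>} x \<partial>M)
      \<le> (\<integral>x. (if x = 0 then 0 else 2 * (u - sin (u * x) / x)) \<partial>M)"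
    using integral_one_minus_Re_char(1)[of u] truncation_kernel_ge[OF assms] assms
    by (intro integral_mono) (auto simp: emeasure_eq_measure)
  thus ?thesis
    using integral_one_minus_Re_char(2)[of u] assms by simp
qed

lemma (in real_distribution) measure_outside_Icc_le:
  assumes char_near_1: "\<And>t. cmod (1 - char M t) \<le> L * \<bar>t\<bar>" and "r > 0"
  shows "measure M (UNIV - {-r..r}) \<le> 4 * L / r"
proof -
  define u where "u = 2 / r"
  have "u > 0"
    using \<open>r > 0\<close> by (simp add: u_def)
  have "u * measure M {x. 2 / u \<le> \<bar>x\<bar>} \<le> (LBINT t:{-u..u}. 1 - Re (char M t))"
    by (rule measure_abs_ge_le_integral_char[OF \<open>u > 0\<close>])
  also have "\<dots> \<le> (LBINT t:{-u..u}. L * u)"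
  proof (rule set_integral_mono)
    show "set_integrable lborel {-u..u} (\<lambda>t. 1 - Re (char M t))"
      by (intro borel_integrable_atLeastAtMost' continuous_at_imp_continuous_on ballI
          continuous_intros isCont_char)
    show "set_integrable lborel {-u..u} (\<lambda>t. L * u)"
      by (intro borel_integrable_atLeastAtMost' continuous_intros)
    fix t :: real
    assume "t \<in> {-u..u}"
    moreover have "0 \<le> L"
      using char_near_1[of 1] norm_ge_zero[of "1 - char M 1"] by linarith
    ultimately have "L * \<bar>t\<bar> \<le> L * u"
      by (intro mult_left_mono) auto
    moreover have "1 - Re (char M t) \<le> cmod (1 - char M t)"
      using complex_Re_le_cmod[of "1 - char M t"] by simp
    ultimately show "1 - Re (char M t) \<le> L * u"
      using char_near_1[of t] by linarith
  qed
  also have "\<dots> = 2 * u * (L * u)"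
    using \<open>u > 0\<close> by (simp add: set_integral_const)
  finally have "measure M {x. 2 / u \<le> \<bar>x\<bar>} \<le> 2 * L * u"
    using \<open>u > 0\<close> by (simp add: algebra_simps)
  moreover have "measure M (UNIV - {-r..r}) \<le> measure M {x. 2 / u \<le> \<bar>x\<bar>}"
    unfolding u_def using \<open>r > 0\<close> by (intro finite_measure_mono) auto
  ultimately show ?thesis
    unfolding u_def by simp
qed

theorem bochner_lipschitz:
  fixes g :: "real \<Rightarrow> complex"
  assumes pd: "pos_def_fun g" and g0: "g 0 = 1" and L: "L-lipschitz_on UNIV g"
  shows "\<exists>\<mu>. real_distribution \<mu> \<and> (\<forall>t. char \<mu> t = g (-t))
    \<and> (\<forall>r>0. measure \<mu> (UNIV - {-r..r}) \<le> 4 * L / r)"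
proof -
  obtain s \<mu> where s: "strict_mono s" and "real_distribution \<mu>"
    and weak_conv: "weak_conv_m (dyadic_fejer_measure g \<circ> id \<circ> s) \<mu>"
    using tight_imp_convergent_subsubsequence[OF tight_dyadic_fejer_measure[OF pd g0 L] strict_mono_id]
    by blast
  interpret real_distribution \<mu> by fact
  have "(\<lambda>N. char (dyadic_fejer_measure g (s N)) t) \<longlonglongrightarrow> char \<mu> t" for t
    using levy_continuity1[OF _ \<open>real_distribution \<mu>\<close> weak_conv]
    by (simp add: real_distribution_dyadic_fejer_measure[OF pd g0])
  hence dyadic: "char \<mu> (p / 2^q) = g (- (p / 2^q))" for p :: int and q :: nat
    using LIMSEQ_subseq_LIMSEQ[OF char_dyadic_fejer_measure_tendsto[OF pd] s] LIMSEQ_unique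
    by (fastforce simp: o_def)
  have "isCont g x" for x
    using lipschitz_on_continuous_on[OF L] by (simp add: continuous_on_eq_continuous_at)
  have char_eq: "char \<mu> t = g (-t)" for t
  proof -
    define t\<^sub>k where "t\<^sub>k k = of_int \<lfloor>t * 2^k\<rfloor> / (2::real)^k" for k :: nat
    have "t\<^sub>k \<longlonglongrightarrow> t"
      unfolding t\<^sub>k_def by (rule floor_dyadic_tendsto)
    hence "(\<lambda>k. char \<mu> (t\<^sub>k k)) \<longlonglongrightarrow> char \<mu> t"
      and "(\<lambda>k. g (- t\<^sub>k k)) \<longlonglongrightarrow> g (-t)"
      by (auto intro: isCont_tendsto_compose[OF isCont_char] isCont_tendsto_compose[OF \<open>isCont g (-t)\<close>]
          tendsto_minus)
    moreover have "char \<mu> (t\<^sub>k k) = g (- t\<^sub>k k)" for k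
      unfolding t\<^sub>k_def by (rule dyadic)
    ultimately show ?thesis
      using LIMSEQ_unique by auto
  qed
  have "cmod (1 - char \<mu> t) \<le> L * \<bar>t\<bar>" for t
    using lipschitz_on_normD[OF L, of 0 "-t"] by (simp add: char_eq g0)
  with char_eq measure_outside_Icc_le show ?thesis
    using \<open>real_distribution \<mu>\<close> by blast
qed

section \<open>Fourier-Stieltjes transforms of finite measures\<close>

definition fourier_stieltjes :: "real measure \<Rightarrow> real \<Rightarrow> complex" where
  "fourier_stieltjes \<mu> r = (\<integral>\<xi>. exp (- \<i> * complex_of_real (r * \<xi>)) \<partial>\<mu>)"

lemma bochner_lipschitz_finite_measure:
  fixes G :: "real \<Rightarrow> complex"
  assumes pd: "pos_def_fun G" and L: "L-lipschitz_on UNIV G" and G0: "G 0 = of_real c" and "c > 0"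
  shows "\<exists>\<mu>. sets \<mu> = sets borel \<and> finite_measure \<mu>
    \<and> (\<forall>r. fourier_stieltjes \<mu> r = G r)
    \<and> (\<forall>r>0. measure \<mu> (UNIV - {-r..r}) \<le> 4 * L / r)"
proof -
  define g where "g x = (1 / c) *\<^sub>R G x" for x
  have "pos_def_fun g"
    unfolding g_def using pd \<open>c > 0\<close> by (intro pos_def_fun_scaleR) auto
  moreover have "(L / c)-lipschitz_on UNIV g"
    unfolding g_def using lipschitz_on_cmult[OF L, of "1 / c"] \<open>c > 0\<close> by simp
  moreover have "g 0 = 1"
    unfolding g_def G0 using \<open>c > 0\<close> by (simp add: scaleR_conv_of_real)
  ultimately obtain \<mu>\<^sub>1 where "real_distribution \<mu>\<^sub>1" and char_eq: "\<And>t. char \<mu>\<^sub>1 t = g (-t)"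
    and tail: "\<And>r. r > 0 \<Longrightarrow> measure \<mu>\<^sub>1 (UNIV - {-r..r}) \<le> 4 * (L / c) / r"
    using bochner_lipschitz by blast
  interpret real_distribution \<mu>\<^sub>1 by fact
  define \<mu> where "\<mu> = density \<mu>\<^sub>1 (\<lambda>_. ennreal c)"
  have "sets \<mu> = sets borel"
    unfolding \<mu>_def by (simp add: events_eq_borel)
  moreover have "finite_measure \<mu>"
    unfolding \<mu>_def using emeasure_space_1
    by (intro finite_measureI) (simp add: emeasure_density_const space_eq_univ)
  moreover have "fourier_stieltjes \<mu> r = G r" for r
  proof -
    have "fourier_stieltjes \<mu> r = c *\<^sub>R char \<mu>\<^sub>1 (-r)"
      unfolding \<mu>_def char_def fourier_stieltjes_def using \<open>c > 0\<close>
      by (subst integral_density) (auto simp del: of_real_mult simp add: of_real_mult[symmetric])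
    thus ?thesis
      unfolding char_eq g_def using \<open>c > 0\<close> by simp
  qed
  moreover have "measure \<mu> (UNIV - {-r..r}) \<le> 4 * L / r" if "r > 0" for r
  proof -
    have "measure \<mu> (UNIV - {-r..r}) = c * measure \<mu>\<^sub>1 (UNIV - {-r..r})"
      unfolding \<mu>_def using \<open>c > 0\<close> by (subst measure_density_const) auto
    also have "\<dots> \<le> c * (4 * (L / c) / r)"
      using tail[OF that] \<open>c > 0\<close> by (intro mult_left_mono) auto
    finally show ?thesis
      using \<open>c > 0\<close> by simp
  qed
  ultimately show ?thesis
    by blast
qed

lemma nonneg_combination_fourier_stieltjes:
  fixes g :: "nat \<Rightarrow> real \<Rightarrow> complex" and a :: "nat \<Rightarrow> real"
  assumes g: "\<forall>i<n. pos_def_fun (g i) \<and> (\<exists>L. L-lipschitz_on UNIV (g i))" and a: "\<forall>i<n. 0 \<le> a i"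
  shows "\<exists>\<mu> A. sets \<mu> = sets borel \<and> finite_measure \<mu> \<and> A > 0
    \<and> (\<forall>r. fourier_stieltjes \<mu> r = 1 + (\<Sum>i<n. a i *\<^sub>R g i r))
    \<and> (\<forall>r>0. measure \<mu> (UNIV - {-r..r}) \<le> A / r)"
proof -
  obtain L where L: "\<forall>i<n. (L i)-lipschitz_on UNIV (g i)"
    using g by metis
  \<comment> \<open>The summand 1 makes G 0 positive, so that G can be normalised to a characteristic function.\<close>
  define G where "G x = 1 + (\<Sum>i<n. a i *\<^sub>R g i x)" for x
  define L\<^sub>G where "L\<^sub>G = (\<Sum>i<n. \<bar>a i\<bar> * L i)"
  define c where "c = 1 + (\<Sum>i<n. a i * Re (g i 0))"
  have "pos_def_fun G"
    unfolding G_def using g a by (intro pos_def_fun_add pos_def_fun_one pos_def_fun_sum) auto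
  moreover have "(0 + L\<^sub>G)-lipschitz_on UNIV G"
    unfolding G_def L\<^sub>G_def using L
    by (intro lipschitz_on_add lipschitz_on_constant lipschitz_on_sum lipschitz_on_cmult) auto
  hence "L\<^sub>G-lipschitz_on UNIV G"
    by simp
  moreover have "G 0 = of_real c"
    unfolding G_def c_def using g pos_def_fun_at_0 by (simp add: scaleR_conv_of_real of_real_Re)
  moreover have "c > 0"
  proof -
    have "0 \<le> (\<Sum>i<n. a i * Re (g i 0))"
      using g a pos_def_fun_at_0 by (intro sum_nonneg mult_nonneg_nonneg) auto
    thus ?thesis
      unfolding c_def by simp
  qed
  ultimately obtain \<mu> where "sets \<mu> = sets borel" "finite_measure \<mu>"
    "\<forall>r. fourier_stieltjes \<mu> r = G r"
    "\<forall>r>0. measure \<mu> (UNIV - {-r..r}) \<le> 4 * L\<^sub>G / r"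
    using bochner_lipschitz_finite_measure by blast
  moreover have "4 * L\<^sub>G / r \<le> (4 * L\<^sub>G + 1) / r" if "r > 0" for r
    using that by (simp add: divide_right_mono)
  moreover have "4 * L\<^sub>G + 1 > 0"
    using lipschitz_on_nonneg[OF \<open>L\<^sub>G-lipschitz_on UNIV G\<close>] by simp
  ultimately show ?thesis
    unfolding G_def by (intro exI[of _ \<mu>] exI[of _ "4 * L\<^sub>G + 1"]) (auto intro: order_trans)
qed

lemma real_combination_fourier_stieltjes:
  fixes g :: "nat \<Rightarrow> real \<Rightarrow> complex" and a :: "nat \<Rightarrow> real"
  assumes g: "\<forall>i<n. pos_def_fun (g i) \<and> (\<exists>L. L-lipschitz_on UNIV (g i))"
  shows "\<exists>\<mu> \<nu> A. sets \<mu> = sets borel \<and> finite_measure \<mu>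
    \<and> sets \<nu> = sets borel \<and> finite_measure \<nu> \<and> A > 0
    \<and> (\<forall>r. (\<Sum>i<n. a i *\<^sub>R g i r) = fourier_stieltjes \<mu> r - fourier_stieltjes \<nu> r)
    \<and> (\<forall>r>0. measure \<mu> (UNIV - {-r..r}) \<le> A / r \<and> measure \<nu> (UNIV - {-r..r}) \<le> A / r)"
proof -
  obtain \<mu> A where \<mu>: "sets \<mu> = sets borel" "finite_measure \<mu>" "A > 0"
    "\<forall>r. fourier_stieltjes \<mu> r = 1 + (\<Sum>i<n. max (a i) 0 *\<^sub>R g i r)"
    "\<forall>r>0. measure \<mu> (UNIV - {-r..r}) \<le> A / r"
    using nonneg_combination_fourier_stieltjes[OF g, of "\<lambda>i. max (a i) 0"] by auto
  obtain \<nu> B where \<nu>: "sets \<nu> = sets borel" "finite_measure \<nu>" "B > 0"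
    "\<forall>r. fourier_stieltjes \<nu> r = 1 + (\<Sum>i<n. max (- a i) 0 *\<^sub>R g i r)"
    "\<forall>r>0. measure \<nu> (UNIV - {-r..r}) \<le> B / r"
    using nonneg_combination_fourier_stieltjes[OF g, of "\<lambda>i. max (- a i) 0"] by auto
  have "(\<Sum>i<n. a i *\<^sub>R g i r)
      = (\<Sum>i<n. max (a i) 0 *\<^sub>R g i r) - (\<Sum>i<n. max (- a i) 0 *\<^sub>R g i r)" for r
    by (simp add: sum_subtractf[symmetric] scaleR_diff_left[symmetric] max_def)
       (intro sum.cong refl, simp)
  moreover have "A / r \<le> (A + B) / r" "B / r \<le> (A + B) / r" if "r > 0" for r
    using that \<mu>(3) \<nu>(3) by (simp_all add: divide_right_mono)
  ultimately show ?thesis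
    using \<mu> \<nu> by (intro exI[of _ \<mu>] exI[of _ \<nu>] exI[of _ "A + B"]) (auto intro: order_trans)
qed

section \<open>Complex measures\<close>

lemma complex_combination_fs_transform:
  fixes g :: "nat \<Rightarrow> real \<Rightarrow> complex" and c :: "nat \<Rightarrow> complex"
  assumes g: "\<forall>i<n. pos_def_fun (g i) \<and> (\<exists>L. L-lipschitz_on UNIV (g i))"
  shows "\<exists>\<eta> A. is_cmeas \<eta> \<and> A > 0 \<and> (\<forall>r. (\<Sum>i<n. c i * g i r) = fs_transform \<eta> r)
    \<and> (\<forall>r>0. \<forall>\<mu>\<in>{pr \<eta>, nr \<eta>, pim \<eta>, nim \<eta>}. measure \<mu> (UNIV - {-r..r}) \<le> A / r)"
proof -
  obtain \<mu>\<^sub>1 \<mu>\<^sub>2 A where re: "sets \<mu>\<^sub>1 = sets borel" "finite_measure \<mu>\<^sub>1"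
    "sets \<mu>\<^sub>2 = sets borel" "finite_measure \<mu>\<^sub>2" "A > 0"
    "\<forall>r. (\<Sum>i<n. Re (c i) *\<^sub>R g i r) = fourier_stieltjes \<mu>\<^sub>1 r - fourier_stieltjes \<mu>\<^sub>2 r"
    "\<forall>r>0. measure \<mu>\<^sub>1 (UNIV - {-r..r}) \<le> A / r \<and> measure \<mu>\<^sub>2 (UNIV - {-r..r}) \<le> A / r"
    using real_combination_fourier_stieltjes[OF g, of "\<lambda>i. Re (c i)"] by blast
  obtain \<mu>\<^sub>3 \<mu>\<^sub>4 B where im: "sets \<mu>\<^sub>3 = sets borel" "finite_measure \<mu>\<^sub>3"
    "sets \<mu>\<^sub>4 = sets borel" "finite_measure \<mu>\<^sub>4" "B > 0"
    "\<forall>r. (\<Sum>i<n. Im (c i) *\<^sub>R g i r) = fourier_stieltjes \<mu>\<^sub>3 r - fourier_stieltjes \<mu>\<^sub>4 r"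
    "\<forall>r>0. measure \<mu>\<^sub>3 (UNIV - {-r..r}) \<le> B / r \<and> measure \<mu>\<^sub>4 (UNIV - {-r..r}) \<le> B / r"
    using real_combination_fourier_stieltjes[OF g, of "\<lambda>i. Im (c i)"] by blast
  define \<eta> where "\<eta> = \<lparr>pr = \<mu>\<^sub>1, nr = \<mu>\<^sub>2, pim = \<mu>\<^sub>3, nim = \<mu>\<^sub>4\<rparr>"
  have "is_cmeas \<eta>"
    unfolding is_cmeas_def \<eta>_def using re im by auto
  moreover have "(\<Sum>i<n. c i * g i r) = fs_transform \<eta> r" for r
  proof -
    have "(\<Sum>i<n. c i * g i r) = (\<Sum>i<n. Re (c i) *\<^sub>R g i r) + \<i> * (\<Sum>i<n. Im (c i) *\<^sub>R g i r)"
      by (subst complex_eq) (simp add: sum.distrib sum_distrib_left scaleR_conv_of_real algebra_simps)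
    thus ?thesis
      unfolding fs_transform_def \<eta>_def using re(6) im(6) by (simp add: fourier_stieltjes_def)
  qed
  moreover have "A / r \<le> (A + B) / r" "B / r \<le> (A + B) / r" if "r > 0" for r
    using that re(5) im(5) by (simp_all add: divide_right_mono)
  ultimately show ?thesis
    using re(5,7) im(5,7) unfolding \<eta>_def
    by (intro exI[of _ \<eta>] exI[of _ "A + B"]) (auto intro: order_trans simp: \<eta>_def)
qed

lemma norm_cm_val_le:
  "cmod (cm_val \<eta> E) \<le> measure (pr \<eta>) E + measure (nr \<eta>) E + measure (pim \<eta>) E + measure (nim \<eta>) E"
proof -
  have "cmod (cm_val \<eta> E) \<le> \<bar>Re (cm_val \<eta> E)\<bar> + \<bar>Im (cm_val \<eta> E)\<bar>"
    by (rule cmod_le)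
  also have "\<dots> = \<bar>measure (pr \<eta>) E - measure (nr \<eta>) E\<bar>
      + \<bar>measure (pim \<eta>) E - measure (nim \<eta>) E\<bar>"
    unfolding cm_val_def by simp
  finally show ?thesis
    using measure_nonneg[of "pr \<eta>" E] measure_nonneg[of "nr \<eta>" E]
      measure_nonneg[of "pim \<eta>" E] measure_nonneg[of "nim \<eta>" E] by linarith
qed

lemma cm_var_le:
  assumes \<eta>: "is_cmeas \<eta>" and E: "E \<in> sets borel"
  shows "cm_var \<eta> E \<le> measure (pr \<eta>) E + measure (nr \<eta>) E + measure (pim \<eta>) E + measure (nim \<eta>) E"
  unfolding cm_var_def
proof (rule cSup_least)
  show "{(\<Sum>i<n. cmod (cm_val \<eta> (P i))) | (n::nat) (P::nat \<Rightarrow> real set).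
      (\<forall>i<n. P i \<in> sets borel) \<and> disjoint_family_on P {..<n} \<and> (\<Union>i<n. P i) = E} \<noteq> {}"
    using E by (auto intro!: exI[of _ "Suc 0"] exI[of _ "\<lambda>_. E"] simp: disjoint_family_on_def)
next
  fix x
  assume "x \<in> {(\<Sum>i<n. cmod (cm_val \<eta> (P i))) | (n::nat) (P::nat \<Rightarrow> real set).
      (\<forall>i<n. P i \<in> sets borel) \<and> disjoint_family_on P {..<n} \<and> (\<Union>i<n. P i) = E}"
  then obtain n :: nat and P :: "nat \<Rightarrow> real set" where x: "x = (\<Sum>i<n. cmod (cm_val \<eta> (P i)))"
    and P: "\<forall>i<n. P i \<in> sets borel" "disjoint_family_on P {..<n}" "(\<Union>i<n. P i) = E"
    by blast
  have additive: "measure \<mu> E = (\<Sum>i<n. measure \<mu> (P i))"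
    if "\<mu> \<in> {pr \<eta>, nr \<eta>, pim \<eta>, nim \<eta>}" for \<mu>
  proof -
    interpret finite_measure \<mu>
      using \<eta> that unfolding is_cmeas_def by blast
    have "sets \<mu> = sets borel"
      using \<eta> that unfolding is_cmeas_def by blast
    thus ?thesis
      using P by (auto intro!: finite_measure_finite_Union[of "{..<n}", unfolded P(3)])
  qed
  have "x \<le> (\<Sum>i<n. measure (pr \<eta>) (P i) + measure (nr \<eta>) (P i)
      + measure (pim \<eta>) (P i) + measure (nim \<eta>) (P i))"
    unfolding x by (intro sum_mono norm_cm_val_le)
  also have "\<dots> = measure (pr \<eta>) E + measure (nr \<eta>) E + measure (pim \<eta>) E + measure (nim \<eta>) E"
    by (simp add: additive sum.distrib)
  finally show "x \<le> measure (pr \<eta>) E + measure (nr \<eta>) E + measure (pim \<eta>) E + measure (nim \<eta>) E" .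
qed

theorem lemma3p7:
  fixes n :: nat and c :: "nat \<Rightarrow> complex" and g :: "nat \<Rightarrow> real \<Rightarrow> complex"
  assumes "\<forall>i<n. pos_def_fun (g i) \<and> (\<exists>L. L-lipschitz_on UNIV (g i))"
  shows "\<exists>\<eta>. is_cmeas \<eta>
           \<and> (\<forall>r. (\<Sum>i<n. c i * g i r) = fs_transform \<eta> r)
           \<and> (\<exists>a A. a > 0 \<and> A > 0 \<and>
                (\<forall>r::real. r \<ge> 1 \<longrightarrow> cm_var \<eta> (UNIV - {-r..r}) \<le> A * r powr (-a)))"
proof -
  obtain \<eta> A where \<eta>: "is_cmeas \<eta>" "A > 0" "\<forall>r. (\<Sum>i<n. c i * g i r) = fs_transform \<eta> r"
    and tails: "\<forall>r>0. \<forall>\<mu>\<in>{pr \<eta>, nr \<eta>, pim \<eta>, nim \<eta>}. measure \<mu> (UNIV - {-r..r}) \<le> A / r"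
    using complex_combination_fs_transform[OF assms] by blast
  have "cm_var \<eta> (UNIV - {-r..r}) \<le> (4 * A) * r powr (-1)" if "r \<ge> 1" for r
  proof -
    have "cm_var \<eta> (UNIV - {-r..r}) \<le> measure (pr \<eta>) (UNIV - {-r..r}) + measure (nr \<eta>) (UNIV - {-r..r})
        + measure (pim \<eta>) (UNIV - {-r..r}) + measure (nim \<eta>) (UNIV - {-r..r})"
      by (rule cm_var_le[OF \<eta>(1)]) simp
    also have "\<dots> \<le> A / r + A / r + A / r + A / r"
      using tails that by (intro add_mono) auto
    finally show ?thesis
      using that by (simp add: powr_minus_divide)
  qed
  with \<eta> show ?thesis
    by (intro exI[of _ \<eta>] conjI exI[of _ "1::real"] exI[of _ "4 * A"]) auto
qed

end
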